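(* Let $n\ge 2$. If some set maximizing $\overline{re}$ over nonempty subsets of $\mathbb{S}$ has cardinality $2$, then $\{1,2\}$ maximizes $\overline{re}$ over nonempty subsets of $\mathbb{S}$ (no assumption on the size of the equilibrium demands is needed).
   Context: Market model: sellers $\mathbb{S}=\{1,\dots,n\}$, product qualities $\theta_1\ge\dots\ge\theta_n\ge0$. For displayed set $S$ and prices $p_i\ge0$: $a_i=e^{\theta_i-p_i}$, MNL demand $q_i=a_i/(1+\sum_{j\in S}a_j)$; sellers in $S$ play the Bertrand game (seller $i$ chooses $p_i\ge0$ to maximize $p_iq_i$). $V:(0,\infty)\to(0,1)$: $V(x)=$ the unique $v\in(0,1)$ with $v\exp(v/(1-v))=x$. For nonempty $S$, $\bar q_0(S)\in(0,1)$ is the unique solution of $\sum_{i\in S}V(\bar q_0e^{\theta_i-1})=1-\bar q_0$, $\bar q_i(S)=V(\bar q_0(S)e^{\theta_i-1})$, and $\overline{re}(S)=\sum_{i\in S}\frac{\bar q_i(S)}{1-\bar q_i(S)}$. *)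

theory Defs
  imports Complex_Main
begin

definition V :: "real \<Rightarrow> real" where
  "V x = (THE v. 0 < v \<and> v < 1 \<and> v * exp (v / (1 - v)) = x)"

text \<open>Equilibrium no-purchase share for displayed set S under qualities \<theta>.\<close>
definition q0bar :: "(nat \<Rightarrow> real) \<Rightarrow> nat set \<Rightarrow> real" where
  "q0bar \<theta> S = (THE q. 0 < q \<and> q < 1 \<and>
      (\<Sum>i\<in>S. V (q * exp (\<theta> i - 1))) = 1 - q)"

definition qbar :: "(nat \<Rightarrow> real) \<Rightarrow> nat set \<Rightarrow> nat \<Rightarrow> real" where
  "qbar \<theta> S i = V (q0bar \<theta> S * exp (\<theta> i - 1))"

definition rebar :: "(nat \<Rightarrow> real) \<Rightarrow> nat set \<Rightarrow> real" where
  "rebar \<theta> S = (\<Sum>i\<in>S. qbar \<theta> S i / (1 - qbar \<theta> S i))"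

definition is_max_rebar :: "(nat \<Rightarrow> real) \<Rightarrow> nat \<Rightarrow> nat set \<Rightarrow> bool" where
  "is_max_rebar \<theta> n S \<longleftrightarrow> S \<subseteq> {1..n} \<and> S \<noteq> {} \<and>
     (\<forall>T. T \<subseteq> {1..n} \<and> T \<noteq> {} \<longrightarrow> rebar \<theta> T \<le> rebar \<theta> S)"

end

theory Submission imports Defs begin

text \<open>In terms of the odds \<open>a = q/(1-q)\<close> of the equilibrium shares, \<open>rebar\<close> is the
sum of the odds. A singleton \<open>{j}\<close> has odds \<open>r\<close> with \<open>r e\<^sup>r = x\<^sub>j\<close>, where
\<open>x\<^sub>j = exp (\<theta>\<^sub>j - 1)\<close>, while a pair \<open>{i, j}\<close> has odds \<open>a, b\<close> with
\<open>b e\<^sup>b (1 + a) = x\<^sub>j (1 - a b)\<close>. If the pair beats the singleton \<open>{j}\<close>, these two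
equations force \<open>b \<le> 1\<close>; and for \<open>b \<le> 1\<close> replacing \<open>i\<close> by a product of higher quality
raises \<open>a\<close> by at least as much as it lowers \<open>b\<close>. An optimal pair \<open>{i, j}\<close> beats both
singletons, so two such swaps turn it into \<open>{1, 2}\<close> without decreasing \<open>rebar\<close>.\<close>

definition V_inv :: "real \<Rightarrow> real" where
  "V_inv v = v * exp (v / (1 - v))"

definition odds :: "real \<Rightarrow> real" where
  "odds q = q / (1 - q)"

lemma V_inv_strict_mono:
  assumes "0 < u" "u < v" "v < 1"
  shows "V_inv u < V_inv v"
proof -
  have "u / (1 - u) < v / (1 - v)" using assms by (simp add: field_simps)
  thus ?thesis unfolding V_inv_def using assms by (intro mult_strict_mono) auto
qed

lemma isCont_V_inv: "v < 1 \<Longrightarrow> isCont V_inv v"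
  unfolding V_inv_def by (intro continuous_intros) auto

lemma odds_le_V_inv:
  assumes "0 < v" "v < 1"
  shows "odds v \<le> V_inv v"
proof -
  have "v * (1 + v / (1 - v)) \<le> V_inv v"
    unfolding V_inv_def using assms exp_ge_add_one_self by (intro mult_left_mono) auto
  moreover have "v * (1 + v / (1 - v)) = odds v" using assms by (simp add: odds_def field_simps)
  ultimately show ?thesis by simp
qed

lemma le_V_inv: "0 < v \<Longrightarrow> v < 1 \<Longrightarrow> v \<le> V_inv v"
  unfolding V_inv_def by simp

lemma V_inv_surj:
  assumes "0 < y"
  shows "\<exists>v. 0 < v \<and> v < 1 \<and> V_inv v = y"
proof -
  define v1 where "v1 = min (1/2) (y/3)"
  define v2 where "v2 = max (1/2) (y/(1+y))"
  have v1: "0 < v1" "v1 \<le> 1/2" and v2: "1/2 \<le> v2" "v2 < 1"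
    using assms by (auto simp: v1_def v2_def)
  have "exp (v1 / (1 - v1)) \<le> exp 1" using v1 by (simp add: field_simps)
  also have "exp 1 \<le> (3::real)" using exp_le by simp
  finally have "V_inv v1 \<le> 3 * v1" unfolding V_inv_def using v1 by (simp add: mult.commute)
  also have "3 * v1 \<le> y" by (simp add: v1_def)
  finally have below: "V_inv v1 \<le> y" .
  have "y / (1 + y) \<le> v2" by (simp add: v2_def)
  hence "y \<le> odds v2" using v2 assms by (simp add: odds_def field_simps)
  also have "odds v2 \<le> V_inv v2" using v2 by (intro odds_le_V_inv) auto
  finally have above: "y \<le> V_inv v2" .
  obtain v where "v1 \<le> v" "v \<le> v2" "V_inv v = y"
    using IVT[of V_inv v1 y v2, OF below above] v1 v2 isCont_V_inv by auto
  thus ?thesis using v1 v2 by (intro exI[of _ v]) auto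
qed

lemma V_eqI:
  assumes "0 < v" "v < 1" "V_inv v = y"
  shows "V y = v"
  unfolding V_def
proof (rule the_equality)
  show "0 < v \<and> v < 1 \<and> v * exp (v / (1 - v)) = y" using assms by (simp add: V_inv_def)
next
  fix w assume w: "0 < w \<and> w < 1 \<and> w * exp (w / (1 - w)) = y"
  hence "V_inv w = V_inv v" using assms by (simp add: V_inv_def)
  thus "w = v" using V_inv_strict_mono[of w v] V_inv_strict_mono[of v w] w assms
    by (metis less_irrefl linorder_neqE_linordered_idom)
qed

lemma
  assumes "0 < y"
  shows V_pos: "0 < V y" and V_less_1: "V y < 1" and V_inv_V: "V_inv (V y) = y"
  using V_inv_surj[OF assms] V_eqI by auto

lemma V_strict_mono: "0 < y \<Longrightarrow> y < z \<Longrightarrow> V y < V z"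
  by (metis V_inv_V V_inv_strict_mono V_less_1 V_pos less_trans not_less_iff_gr_or_eq)

lemma V_mono: "0 < y \<Longrightarrow> y \<le> z \<Longrightarrow> V y \<le> V z"
  using V_strict_mono[of y z] by (cases "y = z") auto

lemma V_le: "0 < y \<Longrightarrow> V y \<le> y"
  using le_V_inv[of "V y"] V_pos V_less_1 V_inv_V by simp

lemma isCont_V:
  assumes "0 < y"
  shows "isCont V y"
proof -
  define v where "v = V y"
  have v: "0 < v" "v < 1" "V_inv v = y" using V_pos V_less_1 V_inv_V assms by (auto simp: v_def)
  define d where "d = min (v/2) ((1-v)/2)"
  have "isCont V (V_inv v)"
  proof (rule isCont_inverse_function[where f = V_inv and x = v])
    show "0 < d" using v by (simp add: d_def)
    fix z assume "\<bar>z - v\<bar> \<le> d"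
    moreover have "d \<le> v/2" "d \<le> (1-v)/2"
      unfolding d_def by (rule min.cobounded1, rule min.cobounded2)
    ultimately have z: "0 < z" "z < 1" using v by (auto simp: abs_le_iff)
    show "V (V_inv z) = z" using V_eqI z by simp
    show "isCont V_inv z" using isCont_V_inv z by simp
  qed
  thus ?thesis using v by simp
qed

lemma equilibrium_share_exists:
  assumes "finite S" "S \<noteq> {}" "\<And>i. i \<in> S \<Longrightarrow> 0 < c i"
  shows "\<exists>t. 0 < t \<and> t < 1 \<and> (\<Sum>i\<in>S. V (t * c i)) = 1 - t"
proof -
  define h where "h t = (\<Sum>i\<in>S. V (t * c i)) + t - 1" for t
  define X where "X = sum c S"
  have X: "0 < X" unfolding X_def using assms by (intro sum_pos) auto
  define t0 where "t0 = 1 / (2 * (1 + X))"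
  have t0: "0 < t0" "t0 < 1" using X by (auto simp: t0_def field_simps)
  have "(\<Sum>i\<in>S. V (t0 * c i)) \<le> (\<Sum>i\<in>S. t0 * c i)"
    using t0 assms by (intro sum_mono V_le) auto
  also have "\<dots> = t0 * X" by (simp add: X_def sum_distrib_left)
  finally have "h t0 < 0" using X by (simp add: h_def t0_def field_simps)
  moreover have "0 < h 1" unfolding h_def using assms by (simp, intro sum_pos V_pos) auto
  moreover have "isCont h t" if "t0 \<le> t" for t
    unfolding h_def using that t0 assms
    by (intro continuous_intros continuous_at_compose[unfolded o_def, OF _ isCont_V]) auto
  ultimately obtain t where "t0 \<le> t" "t \<le> 1" "h t = 0"
    using IVT[of h t0 0 1] t0 by fastforce
  moreover have "t \<noteq> 1" using \<open>0 < h 1\<close> \<open>h t = 0\<close> by auto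
  ultimately show ?thesis using t0 by (intro exI[of _ t]) (auto simp: h_def)
qed

lemma equilibrium_share_unique:
  assumes "finite S" "S \<noteq> {}" "\<And>i. i \<in> S \<Longrightarrow> 0 < c i"
    and "0 < s" "(\<Sum>i\<in>S. V (s * c i)) = 1 - s"
    and "0 < t" "(\<Sum>i\<in>S. V (t * c i)) = 1 - t"
  shows "s = t"
proof -
  have "(\<Sum>i\<in>S. V (u * c i)) < (\<Sum>i\<in>S. V (w * c i))" if "0 < u" "u < w" for u w
    using that assms by (intro sum_strict_mono V_strict_mono) auto
  thus ?thesis using assms by (metis diff_strict_left_mono not_less_iff_gr_or_eq)
qed

lemma q0bar_spec:
  assumes "finite S" "S \<noteq> {}"
  shows "0 < q0bar \<theta> S" "q0bar \<theta> S < 1"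
    "(\<Sum>i\<in>S. V (q0bar \<theta> S * exp (\<theta> i - 1))) = 1 - q0bar \<theta> S"
proof -
  have "\<exists>!t. 0 < t \<and> t < 1 \<and> (\<Sum>i\<in>S. V (t * exp (\<theta> i - 1))) = 1 - t"
    using equilibrium_share_exists[OF assms] equilibrium_share_unique[OF assms]
    by (metis exp_gt_zero)
  from theI'[OF this] show "0 < q0bar \<theta> S" "q0bar \<theta> S < 1"
    "(\<Sum>i\<in>S. V (q0bar \<theta> S * exp (\<theta> i - 1))) = 1 - q0bar \<theta> S"
    unfolding q0bar_def by auto
qed

lemma rebar_eq_sum_odds: "rebar \<theta> S = (\<Sum>i\<in>S. odds (qbar \<theta> S i))"
  by (simp add: rebar_def odds_def)

lemma qbar_pos: "finite S \<Longrightarrow> S \<noteq> {} \<Longrightarrow> 0 < qbar \<theta> S i"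
  and qbar_less_1: "finite S \<Longrightarrow> S \<noteq> {} \<Longrightarrow> qbar \<theta> S i < 1"
  and V_inv_qbar: "finite S \<Longrightarrow> S \<noteq> {} \<Longrightarrow> V_inv (qbar \<theta> S i) = q0bar \<theta> S * exp (\<theta> i - 1)"
  using q0bar_spec V_pos V_less_1 V_inv_V by (simp_all add: qbar_def)

lemma odds_pos: "0 < q \<Longrightarrow> q < 1 \<Longrightarrow> 0 < odds q"
  by (simp add: odds_def)

lemma odds_mono: "p \<le> q \<Longrightarrow> q < 1 \<Longrightarrow> odds p \<le> odds q"
  by (simp add: odds_def field_simps)

lemma V_inv_div_eq_odds: "v < 1 \<Longrightarrow> V_inv v / (1 - v) = odds v * exp (odds v)"
  by (simp add: V_inv_def odds_def)

lemma rebar_singleton: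
  shows "0 < rebar \<theta> {j}" "rebar \<theta> {j} * exp (rebar \<theta> {j}) = exp (\<theta> j - 1)"
proof -
  let ?q = "qbar \<theta> {j} j"
  have q: "0 < ?q" "?q < 1" "?q = 1 - q0bar \<theta> {j}"
    using qbar_pos qbar_less_1 q0bar_spec[of "{j}" \<theta>] by (auto simp: qbar_def)
  have "odds ?q * exp (odds ?q) = V_inv ?q / (1 - ?q)" using q(2) by (simp add: V_inv_div_eq_odds)
  also have "\<dots> = exp (\<theta> j - 1)" using q V_inv_qbar[of "{j}" \<theta> j] by simp
  finally show "rebar \<theta> {j} * exp (rebar \<theta> {j}) = exp (\<theta> j - 1)"
    by (simp add: rebar_eq_sum_odds)
  show "0 < rebar \<theta> {j}" using q by (simp add: rebar_eq_sum_odds odds_pos)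
qed

lemma odds_pair_equation:
  fixes qa qb t x :: real
  assumes "0 < qa" "qa < 1" "qb < 1" "0 < t" "t = 1 - qa - qb" "V_inv qb = t * x"
  shows "odds qa * odds qb < 1"
    "odds qb * exp (odds qb) * (1 + odds qa) = x * (1 - odds qa * odds qb)"
proof -
  have den: "0 < (1 - qa) * (1 - qb)" using assms by simp
  have "1 - odds qa * odds qb = t / ((1 - qa) * (1 - qb))"
    using assms den by (simp add: odds_def field_simps)
  moreover have "0 < t / ((1 - qa) * (1 - qb))" using den assms(4) by simp
  ultimately show "odds qa * odds qb < 1" by linarith
  have "odds qb * exp (odds qb) * (1 + odds qa) = V_inv qb / ((1 - qa) * (1 - qb))"
    using assms V_inv_div_eq_odds[of qb] by (simp add: odds_def field_simps)
  also have "\<dots> = x * (t / ((1 - qa) * (1 - qb)))" using assms by simp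
  finally show "odds qb * exp (odds qb) * (1 + odds qa) = x * (1 - odds qa * odds qb)"
    using \<open>1 - odds qa * odds qb = _\<close> by simp
qed

lemma rebar_pair:
  fixes \<theta> :: "nat \<Rightarrow> real"
  assumes "i \<noteq> j"
  defines "a \<equiv> odds (qbar \<theta> {i, j} i)" and "b \<equiv> odds (qbar \<theta> {i, j} j)"
  shows "rebar \<theta> {i, j} = a + b" "0 < a" "0 < b" "a * b < 1"
    "b * exp b * (1 + a) = exp (\<theta> j - 1) * (1 - a * b)"
proof -
  let ?t = "q0bar \<theta> {i, j}"
  have q: "0 < qbar \<theta> {i, j} k" "qbar \<theta> {i, j} k < 1" for k
    using qbar_pos qbar_less_1 by auto
  have t: "0 < ?t" "?t = 1 - qbar \<theta> {i, j} i - qbar \<theta> {i, j} j"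
    using q0bar_spec[of "{i, j}" \<theta>] assms(1) by (auto simp: qbar_def)
  show "rebar \<theta> {i, j} = a + b" using assms by (simp add: rebar_eq_sum_odds)
  show "0 < a" "0 < b" using q by (simp_all add: a_def b_def odds_pos)
  show "a * b < 1" "b * exp b * (1 + a) = exp (\<theta> j - 1) * (1 - a * b)"
    unfolding a_def b_def using q t V_inv_qbar[of "{i, j}" \<theta> j]
    by (intro odds_pair_equation; simp)+
qed

text \<open>Raising the quality of the partner of \<open>j\<close> lowers the outside share, hence
\<open>j\<close>'s share, and raises the partner's share since the three shares sum to one.\<close>

lemma qbar_pair_swap_mono:
  assumes "i \<noteq> j" "k \<noteq> j" "\<theta> i \<le> \<theta> k"
  shows "qbar \<theta> {i, j} i \<le> qbar \<theta> {k, j} k" "qbar \<theta> {k, j} j \<le> qbar \<theta> {i, j} j"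
proof -
  let ?t = "q0bar \<theta> {i, j}" and ?s = "q0bar \<theta> {k, j}"
  have sum_i: "qbar \<theta> {i, j} i + qbar \<theta> {i, j} j = 1 - ?t"
    and sum_k: "qbar \<theta> {k, j} k + qbar \<theta> {k, j} j = 1 - ?s"
    using q0bar_spec(3)[of "{i, j}" \<theta>] q0bar_spec(3)[of "{k, j}" \<theta>] assms
    by (simp_all add: qbar_def)
  have pos: "0 < ?t" "0 < ?s" using q0bar_spec by auto
  have "?s \<le> ?t"
  proof (rule ccontr)
    assume "\<not> ?s \<le> ?t"
    hence "?t * exp (\<theta> i - 1) < ?s * exp (\<theta> k - 1)"
      using assms(3) pos by (intro mult_less_le_imp_less) auto
    hence "qbar \<theta> {i, j} i < qbar \<theta> {k, j} k"
      unfolding qbar_def using pos by (intro V_strict_mono) auto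
    moreover have "qbar \<theta> {i, j} j < qbar \<theta> {k, j} j"
      unfolding qbar_def using pos \<open>\<not> ?s \<le> ?t\<close> by (intro V_strict_mono) auto
    ultimately show False using sum_i sum_k \<open>\<not> ?s \<le> ?t\<close> by linarith
  qed
  thus "qbar \<theta> {k, j} j \<le> qbar \<theta> {i, j} j"
    unfolding qbar_def using pos by (intro V_mono) auto
  thus "qbar \<theta> {i, j} i \<le> qbar \<theta> {k, j} k" using sum_i sum_k \<open>?s \<le> ?t\<close> by linarith
qed

lemma second_odds_le_1:
  fixes a b x :: real
  assumes "0 < a" "0 < b" "a * b < 1"
    and "b * exp b * (1 + a) = x * (1 - a * b)" "x \<le> (a + b) * exp (a + b)"
  shows "b \<le> 1"
proof (rule ccontr)
  assume "\<not> b \<le> 1"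
  hence "1 < b" by simp
  have "a < 1"
  proof (rule ccontr)
    assume "\<not> a < 1"
    hence "1 * 1 \<le> a * b" using \<open>1 < b\<close> by (intro mult_mono) auto
    thus False using assms by simp
  qed
  have "b * (1 + a) * exp b \<le> ((a + b) * exp a * (1 - a * b)) * exp b"
    using assms mult_right_mono[OF assms(5), of "1 - a * b"] by (simp add: exp_add algebra_simps)
  hence "b * (1 + a) \<le> (a + b) * exp a * (1 - a * b)" by simp
  hence "b * (1 + a) * (1 - a) \<le> (a + b) * exp a * (1 - a * b) * (1 - a)"
    using \<open>a < 1\<close> by (intro mult_right_mono) auto
  also have "\<dots> = ((a + b) * (1 - a * b)) * (exp a * (1 - a))" by (simp add: algebra_simps)
  also have "\<dots> \<le> (a + b) * (1 - a * b)"
  proof -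
    have "1 - a \<le> exp (- a)" using exp_ge_add_one_self[of "- a"] by simp
    hence "exp a * (1 - a) \<le> 1" by (simp add: exp_minus field_simps)
    thus ?thesis using assms by (intro mult_left_le) auto
  qed
  finally have "0 \<le> a * (1 - b * b)" by (simp add: algebra_simps)
  moreover have "1 * 1 < b * b" using \<open>1 < b\<close> by (intro mult_strict_mono) auto
  ultimately show False using assms by (simp add: zero_le_mult_iff)
qed

lemma pair_odds_polynomial_le:
  fixes a b d :: real
  assumes "0 < a" "0 \<le> d" "d < b" "b \<le> 1" "a * b < 1"
  shows "(b - d) * (1 + a + d) * (1 - a * b) \<le> (1 + d) * b * (1 + a) * (1 - (a + d) * (b - d))"
proof -
  define c where "c = 1 - a * b"
  have "(1 + d) * b * (1 + a) * (1 - (a + d) * (b - d)) - (b - d) * (1 + a + d) * (1 - a * b)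
     = d * (b * (1 + a) * (1 + a) * (1 - b) + c * (1 + a - b)
         + d * (b * (1 + a) * (1 + a - b) + c) + d * d * b * (1 + a))"
    by (simp add: c_def algebra_simps)
  also have "\<dots> \<ge> 0" using assms unfolding c_def
    by (intro mult_nonneg_nonneg add_nonneg_nonneg) auto
  finally show ?thesis by simp
qed

text \<open>If \<open>a + b > a' + b'\<close>, the loss \<open>d = b - b'\<close> exceeds the gain \<open>a' - a\<close>; bounding
\<open>exp d\<close> by \<open>1 + d\<close> then contradicts the polynomial inequality above.\<close>

lemma pair_odds_sum_mono:
  fixes a b a' b' x :: real
  assumes "0 < a" "0 < b'" "a * b < 1" "a' * b' < 1" "b \<le> 1" "a \<le> a'" "b' \<le> b"
    and "b * exp b * (1 + a) = x * (1 - a * b)" "b' * exp b' * (1 + a') = x * (1 - a' * b')"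
  shows "a + b \<le> a' + b'"
proof (rule ccontr)
  assume "\<not> a + b \<le> a' + b'"
  define d where "d = b - b'"
  define e where "e = a' - a"
  have de: "0 \<le> e" "e < d" "d < b" using assms \<open>\<not> a + b \<le> a' + b'\<close> by (auto simp: d_def e_def)
  have shifted: "a' = a + e" "b' = b - d" by (auto simp: d_def e_def)
  have "b' * exp b' * (1 + a') * (1 - a * b) = x * (1 - a' * b') * (1 - a * b)"
    by (simp add: assms(9))
  also have "\<dots> = b * exp b * (1 + a) * (1 - a' * b')"
    by (subst assms(8)) (simp add: algebra_simps)
  also have "\<dots> = (b * (1 + a) * (1 - a' * b') * exp d) * exp b'"
    by (simp add: d_def algebra_simps flip: exp_add)
  finally have "(b' * (1 + a') * (1 - a * b)) * exp b' = (b * (1 + a) * (1 - a' * b') * exp d) * exp b'"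
    by (simp add: ac_simps)
  hence "b' * (1 + a') * (1 - a * b) = b * (1 + a) * (1 - a' * b') * exp d"
    by simp
  moreover have "b * (1 + a) * (1 - a' * b') * (1 + d) \<le> b * (1 + a) * (1 - a' * b') * exp d"
    using assms by (intro mult_left_mono) auto
  ultimately have "(1 + d) * b * (1 + a) * (1 - (a + e) * (b - d)) \<le> (b - d) * (1 + a + e) * (1 - a * b)"
    using shifted by (simp add: algebra_simps)
  moreover have "(1 + d) * b * (1 + a) * (1 - (a + d) * (b - d))
      \<le> (1 + d) * b * (1 + a) * (1 - (a + e) * (b - d))"
    using de assms by (intro mult_left_mono) (auto intro!: mult_right_mono)
  moreover have "(b - d) * (1 + a + e) * (1 - a * b) < (b - d) * (1 + a + d) * (1 - a * b)"
    using de assms by (intro mult_strict_right_mono mult_strict_left_mono) auto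
  ultimately show False using pair_odds_polynomial_le[of a d b] de assms by linarith
qed

lemma rebar_pair_swap_le:
  assumes "i \<noteq> j" "k \<noteq> j" "\<theta> i \<le> \<theta> k" "rebar \<theta> {j} \<le> rebar \<theta> {i, j}"
  shows "rebar \<theta> {i, j} \<le> rebar \<theta> {k, j}"
proof -
  define a b a' b' where "a = odds (qbar \<theta> {i, j} i)" and "b = odds (qbar \<theta> {i, j} j)"
    and "a' = odds (qbar \<theta> {k, j} k)" and "b' = odds (qbar \<theta> {k, j} j)"
  note ab = rebar_pair[OF assms(1), of \<theta>, folded a_def b_def]
  note ab' = rebar_pair[OF assms(2), of \<theta>, folded a'_def b'_def]
  have "a \<le> a'" "b' \<le> b"
    unfolding a_def a'_def b_def b'_def using qbar_pair_swap_mono[OF assms(1-3)]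
    by (auto intro!: odds_mono qbar_less_1)
  have "exp (\<theta> j - 1) = rebar \<theta> {j} * exp (rebar \<theta> {j})" using rebar_singleton by simp
  also have "\<dots> \<le> (a + b) * exp (a + b)"
    using assms(4) rebar_singleton(1)[of \<theta> j] ab(1) by (intro mult_mono) auto
  finally have "b \<le> 1" by (rule second_odds_le_1[OF ab(2-5)])
  with pair_odds_sum_mono[OF ab(2) ab'(3) ab(4) ab'(4) _ \<open>a \<le> a'\<close> \<open>b' \<le> b\<close> ab(5) ab'(5)]
  show ?thesis using ab(1) ab'(1) by simp
qed

lemma is_max_rebar_if_le:
  assumes "is_max_rebar \<theta> n S" "T \<subseteq> {1..n}" "T \<noteq> {}" "rebar \<theta> S \<le> rebar \<theta> T"
  shows "is_max_rebar \<theta> n T"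
  using assms unfolding is_max_rebar_def by (meson order_trans)

lemma card_2_iff_less: "card S = 2 \<longleftrightarrow> (\<exists>i j :: nat. S = {i, j} \<and> i < j)"
proof
  assume "card S = 2"
  then obtain x y where "S = {x, y}" "x \<noteq> y" by (auto simp: card_2_iff)
  thus "\<exists>i j. S = {i, j} \<and> i < j"
    by (cases x y rule: linorder_cases) (auto simp: insert_commute)
qed auto

theorem theorem8:
  fixes \<theta> :: "nat \<Rightarrow> real" and n :: nat
  assumes "n \<ge> 2"
    and "\<And>i j. 1 \<le> i \<Longrightarrow> i \<le> j \<Longrightarrow> j \<le> n \<Longrightarrow> \<theta> j \<le> \<theta> i"
    and "\<And>i. 1 \<le> i \<Longrightarrow> i \<le> n \<Longrightarrow> 0 \<le> \<theta> i"
    and "\<exists>S. is_max_rebar \<theta> n S \<and> card S = 2"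
  shows "is_max_rebar \<theta> n {1, 2}"
proof -
  obtain i j where opt: "is_max_rebar \<theta> n {i, j}" and "i < j"
    using assms(4) unfolding card_2_iff_less by blast
  have ij: "1 \<le> i" "j \<le> n" using opt unfolding is_max_rebar_def by auto
  have beats: "rebar \<theta> T \<le> rebar \<theta> {i, j}" if "T \<subseteq> {1..n}" "T \<noteq> {}" for T
    using opt that unfolding is_max_rebar_def by blast
  have "rebar \<theta> {i, j} \<le> rebar \<theta> {1, j}"
  proof (rule rebar_pair_swap_le)
    show "i \<noteq> j" "1 \<noteq> j" using \<open>i < j\<close> ij by auto
    show "\<theta> i \<le> \<theta> 1" using assms(2)[of 1 i] \<open>i < j\<close> ij by auto
    show "rebar \<theta> {j} \<le> rebar \<theta> {i, j}" using beats[of "{j}"] \<open>i < j\<close> ij by auto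
  qed
  moreover have "rebar \<theta> {j, 1} \<le> rebar \<theta> {2, 1}"
  proof (rule rebar_pair_swap_le)
    show "j \<noteq> 1" "(2::nat) \<noteq> 1" using \<open>i < j\<close> ij by auto
    show "\<theta> j \<le> \<theta> 2" using assms(2)[of 2 j] \<open>i < j\<close> ij by auto
    show "rebar \<theta> {1} \<le> rebar \<theta> {j, 1}"
      using beats[of "{1}"] assms(1) calculation by (auto simp: insert_commute)
  qed
  ultimately have "rebar \<theta> {i, j} \<le> rebar \<theta> {1, 2}" by (simp add: insert_commute)
  thus ?thesis using is_max_rebar_if_le[OF opt] assms(1) by auto
qed

end
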